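(* Let $k\ge 1$ and consider $k$ linear constraints $\mathcal{C}_i[y]=\kappa_i$, $i=1,\dots,k$, on $y:\mathbb{R}\to\mathbb{R}$, with $\kappa_i\in\mathbb{R}$. Let $s_1,\dots,s_k$ be linearly independent support functions with invertible support matrix $\mathbb{S}_{ij}=\mathcal{C}_i[s_j]$, $\alpha=\mathbb{S}^{-1}$, switching functions $\phi_j(x)=\sum_m s_m(x)\alpha_{mj}$, projection functionals $\rho_j(x,g(x))=\kappa_j-\mathcal{C}_j[g]$, and constrained expression $y(x,g(x))=g(x)+\sum_{j}\phi_j(x)\rho_j(x,g(x))$. Then for a given function $f$ satisfying the constraints, the free function $g$ such that $y(x,g(x))=f(x)$ is not unique. In other words, the constrained expression is not an injective functional from the set of all free functions to the set of all functions satisfying the constraints.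
   Context: Each $\mathcal{C}_i$ is a linear operator returning the operand function evaluated in the same way as the dependent variable appears in the $i$-th constraint (combinations of values, derivatives and integrals of the function). A free function is any $g:\mathbb{R}\to\mathbb{R}$ for which all $\mathcal{C}_i[g]$ are defined. A function $f$ satisfies the constraints if $\mathcal{C}_i[f]=\kappa_i$ for all $i$. *)

theory Defs
  imports "HOL-Analysis.Analysis"
begin

text \<open>The constraints are indexed by a finite type 'k (so k = CARD('k) \<ge> 1).
  D is the set of free functions (those on which every C i is defined);
  it is a linear space of functions, and each C i is linear on D.\<close>

definition fun_subspace :: "(real \<Rightarrow> real) set \<Rightarrow> bool" where
  "fun_subspace D \<longleftrightarrow> (\<lambda>x. 0) \<in> D \<and>
     (\<forall>g\<in>D. \<forall>h\<in>D. \<forall>a b. (\<lambda>x. a * g x + b * h x) \<in> D)"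

definition linear_on_funs :: "(real \<Rightarrow> real) set \<Rightarrow> ((real \<Rightarrow> real) \<Rightarrow> real) \<Rightarrow> bool" where
  "linear_on_funs D L \<longleftrightarrow>
     (\<forall>g\<in>D. \<forall>h\<in>D. \<forall>a b. L (\<lambda>x. a * g x + b * h x) = a * L g + b * L h)"

definition lin_indep_funs :: "('k::finite \<Rightarrow> real \<Rightarrow> real) \<Rightarrow> bool" where
  "lin_indep_funs s \<longleftrightarrow>
     (\<forall>c :: 'k \<Rightarrow> real. (\<forall>x. (\<Sum>j\<in>UNIV. c j * s j x) = 0) \<longrightarrow> (\<forall>j. c j = 0))"

definition support_matrix ::
  "('k::finite \<Rightarrow> (real \<Rightarrow> real) \<Rightarrow> real) \<Rightarrow> ('k \<Rightarrow> real \<Rightarrow> real) \<Rightarrow> real^'k^'k" where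
  "support_matrix C s = (\<chi> i j. C i (s j))"

definition switching ::
  "('k::finite \<Rightarrow> (real \<Rightarrow> real) \<Rightarrow> real) \<Rightarrow> ('k \<Rightarrow> real \<Rightarrow> real) \<Rightarrow> 'k \<Rightarrow> real \<Rightarrow> real" where
  "switching C s j x = (\<Sum>m\<in>UNIV. s m x * (matrix_inv (support_matrix C s)) $ m $ j)"

definition projection ::
  "('k::finite \<Rightarrow> (real \<Rightarrow> real) \<Rightarrow> real) \<Rightarrow> ('k \<Rightarrow> real) \<Rightarrow> 'k \<Rightarrow> (real \<Rightarrow> real) \<Rightarrow> real" where
  "projection C \<kappa> j g = \<kappa> j - C j g"

definition constrained_expr ::
  "('k::finite \<Rightarrow> (real \<Rightarrow> real) \<Rightarrow> real) \<Rightarrow> ('k \<Rightarrow> real \<Rightarrow> real) \<Rightarrow> ('k \<Rightarrow> real)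
     \<Rightarrow> (real \<Rightarrow> real) \<Rightarrow> real \<Rightarrow> real" where
  "constrained_expr C s \<kappa> g x = g x + (\<Sum>j\<in>UNIV. switching C s j x * projection C \<kappa> j g)"

end

theory Submission
  imports Defs
begin

text \<open>With \<alpha> = S\<inverse>, the switching functions reproduce the support functions:
  \<Sum>j. \<phi>j(x) Cj[sa] = sa(x). Adding a support function sa to a free function g
  therefore lowers each projection functional by Cj[sa] and the switching part by
  exactly sa(x), so the constrained expression cannot tell g and g + sa apart.
  Since it fixes f, and sa \<noteq> 0 by linear independence, f and f + sa are two
  different free functions mapped to f.\<close>

lemma matrix_inv_left:
  fixes A :: "'a::semiring_1^'n^'m"
  assumes "invertible A"
  shows "matrix_inv A ** A = mat 1"
  using someI_ex[OF assms[unfolded invertible_def]] by (simp add: matrix_inv_def)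

lemma fun_subspace_add:
  assumes "fun_subspace D" "g \<in> D" "h \<in> D"
  shows "(\<lambda>x. g x + h x) \<in> D"
proof -
  have "(\<lambda>x. 1 * g x + 1 * h x) \<in> D"
    using assms unfolding fun_subspace_def by blast
  then show ?thesis
    by simp
qed

lemma linear_on_funs_add:
  assumes "linear_on_funs D L" "g \<in> D" "h \<in> D"
  shows "L (\<lambda>x. g x + h x) = L g + L h"
proof -
  have "L (\<lambda>x. 1 * g x + 1 * h x) = 1 * L g + 1 * L h"
    using assms unfolding linear_on_funs_def by blast
  then show ?thesis
    by simp
qed

lemma lin_indep_funs_nonzero:
  assumes "lin_indep_funs s"
  shows "s a \<noteq> (\<lambda>x. 0)"
proof
  assume "s a = (\<lambda>x. 0)"
  then have "\<forall>x. (\<Sum>j\<in>UNIV. of_bool (j = a) * s j x) = 0"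
    by simp
  then have "\<forall>j. of_bool (j = a) = (0::real)"
    using assms[unfolded lin_indep_funs_def, rule_format, of "\<lambda>j. of_bool (j = a)"] by simp
  then show False
    by auto
qed

lemma switching_reproduces_support:
  assumes "invertible (support_matrix C s)"
  shows "(\<Sum>j\<in>UNIV. switching C s j x * C j (s a)) = s a x"
proof -
  define S where "S = support_matrix C s"
  define \<alpha> where "\<alpha> = matrix_inv S"
  have "(\<Sum>j\<in>UNIV. switching C s j x * C j (s a))
      = (\<Sum>j\<in>UNIV. \<Sum>m\<in>UNIV. s m x * (\<alpha> $ m $ j * S $ j $ a))"
    unfolding switching_def S_def \<alpha>_def support_matrix_def
    by (simp add: sum_distrib_right mult.assoc)
  also have "\<dots> = (\<Sum>m\<in>UNIV. s m x * (\<Sum>j\<in>UNIV. \<alpha> $ m $ j * S $ j $ a))"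
    by (subst sum.swap) (simp add: sum_distrib_left)
  also have "\<dots> = (\<Sum>m\<in>UNIV. s m x * (\<alpha> ** S) $ m $ a)"
    by (simp add: matrix_matrix_mult_def)
  also have "\<dots> = s a x"
    using assms by (simp add: S_def \<alpha>_def matrix_inv_left mat_def if_distrib cong: if_cong)
  finally show ?thesis .
qed

lemma constrained_expr_add_support:
  assumes "fun_subspace D" "\<And>i. linear_on_funs D (C i)" "\<And>j. s j \<in> D"
    and "invertible (support_matrix C s)" "g \<in> D"
  shows "constrained_expr C s \<kappa> (\<lambda>x. g x + s a x) = constrained_expr C s \<kappa> g"
proof
  fix x
  have "projection C \<kappa> j (\<lambda>x. g x + s a x) = projection C \<kappa> j g - C j (s a)" for j
    using linear_on_funs_add[OF assms(2) assms(5,3)] by (simp add: projection_def)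
  then have "(\<Sum>j\<in>UNIV. switching C s j x * projection C \<kappa> j (\<lambda>x. g x + s a x))
      = (\<Sum>j\<in>UNIV. switching C s j x * projection C \<kappa> j g) - s a x"
    using switching_reproduces_support[OF assms(4)]
    by (simp add: right_diff_distrib sum_subtractf)
  then show "constrained_expr C s \<kappa> (\<lambda>x. g x + s a x) x = constrained_expr C s \<kappa> g x"
    by (simp add: constrained_expr_def)
qed

lemma constrained_expr_fixes_solution:
  assumes "\<And>i. C i f = \<kappa> i"
  shows "constrained_expr C s \<kappa> f = f"
  using assms by (simp add: constrained_expr_def projection_def fun_eq_iff)

theorem theorem3:
  fixes D :: "(real \<Rightarrow> real) set"
    and C :: "'k::finite \<Rightarrow> (real \<Rightarrow> real) \<Rightarrow> real"
    and s :: "'k \<Rightarrow> real \<Rightarrow> real"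
    and \<kappa> :: "'k \<Rightarrow> real"
    and f :: "real \<Rightarrow> real"
  assumes "fun_subspace D"
    and "\<And>i. linear_on_funs D (C i)"
    and "\<And>j. s j \<in> D"
    and "lin_indep_funs s"
    and "invertible (support_matrix C s)"
    and "f \<in> D"
    and "\<And>i. C i f = \<kappa> i"
  shows "\<exists>g1\<in>D. \<exists>g2\<in>D. g1 \<noteq> g2 \<and>
           constrained_expr C s \<kappa> g1 = f \<and> constrained_expr C s \<kappa> g2 = f"
proof -
  fix a :: 'k
  let ?g = "\<lambda>x. f x + s a x"
  have "?g \<in> D"
    using fun_subspace_add[OF assms(1,6,3)] .
  moreover have "f \<noteq> ?g"
    using lin_indep_funs_nonzero[OF assms(4), of a] by (auto simp: fun_eq_iff)
  moreover have "constrained_expr C s \<kappa> f = f"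
    by (rule constrained_expr_fixes_solution) (rule assms(7))
  moreover have "constrained_expr C s \<kappa> ?g = f"
    using constrained_expr_add_support[OF assms(1-3,5,6)] \<open>constrained_expr C s \<kappa> f = f\<close>
    by simp
  ultimately show ?thesis
    using assms(6) by blast
qed

end
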